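(* Let $m_0,r\ge 0$ and $m$ be integers with $0\le m\le m_0+r$, and let $X\sim\mathrm{Hyper}(m_0,r;m)$, i.e. $\mathbb P(X=k)=\binom{m_0}{k}\binom{r}{m-k}\big/\binom{m_0+r}{m}$. Then $$\mathbb E\left[\frac{X}{1+m-X}\cdot\frac{r+X-m}{1+m_0-X}\right]=1-\frac{\binom{m_0}{m_0\wedge m}\binom{r}{m-m_0\wedge m}}{\binom{m_0+r}{m}}.$$ In particular this expectation is at most $1$ for every $m$.
   Context: $a\wedge b=\min(a,b)$. Binomial coefficient conventions: $\binom{0}{0}=1$, and $\binom{n}{k}=0$ if $n<0$, or if $k<0$, or if $k>n$. *)

theory Defs
  imports "HOL-Analysis.Analysis"
begin

definition binomZ :: "int \<Rightarrow> int \<Rightarrow> real" where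
  "binomZ n k = (if n < 0 \<or> k < 0 \<or> k > n then 0 else real (nat n choose nat k))"

definition hyper_pmf :: "nat \<Rightarrow> nat \<Rightarrow> nat \<Rightarrow> int \<Rightarrow> real" where
  "hyper_pmf m0 r m k = binomZ (int m0) k * binomZ (int r) (int m - k) / binomZ (int m0 + int r) (int m)"

definition hyper_expect :: "nat \<Rightarrow> nat \<Rightarrow> nat \<Rightarrow> (int \<Rightarrow> real) \<Rightarrow> real" where
  "hyper_expect m0 r m g = (\<Sum>k\<in>{0..int m}. hyper_pmf m0 r m k * g k)"

end

theory Submission imports Defs begin

text \<open>Writing \<open>w k = C(m\<^sub>0,k) C(r,m-k)\<close> for the unnormalised weights, the ratio inside
  the expectation is exactly the factor that shifts the weights down by one,
  \<open>w k \<cdot> k/(1+m-k) \<cdot> (r+k-m)/(1+m\<^sub>0-k) = w (k-1)\<close> for \<open>1 \<le> k \<le> min m\<^sub>0 m\<close>, and it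
  vanishes at \<open>k = 0\<close>. Hence the expectation is \<open>\<Sum>k<min m\<^sub>0 m. w k\<close> divided by
  \<open>C(m\<^sub>0+r,m)\<close>, and Vandermonde's identity \<open>\<Sum>k\<le>min m\<^sub>0 m. w k = C(m\<^sub>0+r,m)\<close> leaves
  exactly \<open>1 - w (min m\<^sub>0 m) / C(m\<^sub>0+r,m)\<close>.\<close>

definition hyper_weight :: "nat \<Rightarrow> nat \<Rightarrow> nat \<Rightarrow> nat \<Rightarrow> real" where
  "hyper_weight m0 r m k = real (m0 choose k) * real (r choose (m - k))"

lemma binomial_Suc_mult_Suc: "real (n choose Suc k) * Suc k = real (n choose k) * (n - k)"
proof -
  have "(n choose Suc k) * Suc k = (n choose k) * (n - k)"
    using times_binomial_minus1_eq[of "Suc k" n] binomial_absorb_comp[of n k]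
    by (simp add: mult.commute)
  then show ?thesis
    by (metis of_nat_mult)
qed

lemma hyper_pmf_of_nat:
  assumes "k \<le> m" "m \<le> m0 + r"
  shows "hyper_pmf m0 r m (int k) = hyper_weight m0 r m k / real ((m0 + r) choose m)"
  using assms unfolding hyper_pmf_def hyper_weight_def binomZ_def
  by (auto simp: binomial_eq_0 nat_add_distrib nat_diff_distrib)

lemma hyper_expect_eq_sum:
  assumes "m \<le> m0 + r"
  shows "hyper_expect m0 r m g
           = (\<Sum>k\<le>m. hyper_weight m0 r m k * g (int k)) / real ((m0 + r) choose m)"
proof -
  have "{0..int m} = int ` {..m}"
    by (auto simp: image_iff intro!: bexI[where x="nat _"])
  then show ?thesis
    unfolding hyper_expect_def
    by (simp add: sum.reindex sum_divide_distrib hyper_pmf_of_nat assms)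
qed

lemma binomZ_hyper_weight:
  assumes "k \<le> m"
  shows "binomZ (int m0) (int k) * binomZ (int r) (int m - int k) = hyper_weight m0 r m k"
  using assms unfolding binomZ_def hyper_weight_def
  by (auto simp: binomial_eq_0 nat_diff_distrib)

lemma hyper_weight_shift:
  assumes "i < m"
  shows "hyper_weight m0 r m (Suc i) *
     ((real_of_int (int (Suc i)) / real_of_int (1 + int m - int (Suc i))) *
      (real_of_int (int r + int (Suc i) - int m) / real_of_int (1 + int m0 - int (Suc i))))
   = (if i < m0 then hyper_weight m0 r m i else 0)"
proof (cases "i < m0")
  case False
  then show ?thesis by (simp add: hyper_weight_def)
next
  case True
  define j where "j = m - Suc i"
  have m_minus_i: "m - i = Suc j" using assms j_def by simp
  have lower: "real (m0 choose Suc i) * real (Suc i) / real (m0 - i) = real (m0 choose i)"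
    using binomial_Suc_mult_Suc[of m0 i] True
    by (simp add: field_simps)
  have upper: "real (r choose j) * real_of_int (int r + int (Suc i) - int m) / real (Suc j)
      = real (r choose (m - i))"
  proof (cases "j \<le> r")
    case True
    then have "real_of_int (int r + int (Suc i) - int m) = real (r - j)"
      using assms j_def by simp
    then show ?thesis
      using binomial_Suc_mult_Suc[of r j] m_minus_i
      by (simp add: field_simps)
  next
    case False
    then show ?thesis using m_minus_i by (simp add: binomial_eq_0)
  qed
  have denominators: "real_of_int (1 + int m - int (Suc i)) = real (Suc j)"
       "real_of_int (1 + int m0 - int (Suc i)) = real (m0 - i)"
    using assms True j_def by simp_all
  have "hyper_weight m0 r m (Suc i) *
     ((real_of_int (int (Suc i)) / real_of_int (1 + int m - int (Suc i))) *
      (real_of_int (int r + int (Suc i) - int m) / real_of_int (1 + int m0 - int (Suc i))))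
     = (real (m0 choose Suc i) * real (Suc i) / real (m0 - i)) *
       (real (r choose j) * real_of_int (int r + int (Suc i) - int m) / real (Suc j))"
    unfolding hyper_weight_def denominators j_def[symmetric] by (simp add: field_simps)
  also have "\<dots> = hyper_weight m0 r m i"
    unfolding lower upper hyper_weight_def ..
  finally show ?thesis using True by simp
qed

lemma sum_hyper_weight_ratio:
  "(\<Sum>k\<le>m. hyper_weight m0 r m k *
       ((real_of_int (int k) / real_of_int (1 + int m - int k)) *
        (real_of_int (int r + int k - int m) / real_of_int (1 + int m0 - int k))))
   = (\<Sum>i<min m0 m. hyper_weight m0 r m i)"
  (is "(\<Sum>k\<le>m. ?t k) = _")
proof -
  have "(\<Sum>k\<le>m. ?t k) = (\<Sum>i<m. ?t (Suc i))"
    by (simp add: sum.atMost_shift)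
  also have "\<dots> = (\<Sum>i<m. if i < m0 then hyper_weight m0 r m i else 0)"
    by (rule sum.cong[OF refl], rule hyper_weight_shift) simp
  also have "\<dots> = (\<Sum>i\<in>{..<m} \<inter> {i. i < m0}. hyper_weight m0 r m i)"
    by (simp add: sum.inter_restrict)
  also have "{..<m} \<inter> {i. i < m0} = {..<min m0 m}"
    by auto
  finally show ?thesis .
qed

lemma sum_lessThan_min_hyper_weight:
  "(\<Sum>i<min m0 m. hyper_weight m0 r m i)
     = real ((m0 + r) choose m) - hyper_weight m0 r m (min m0 m)"
proof -
  have "(\<Sum>i\<le>min m0 m. hyper_weight m0 r m i) = (\<Sum>i\<le>m. hyper_weight m0 r m i)"
    by (rule sum.mono_neutral_left) (auto simp: hyper_weight_def binomial_eq_0)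
  also have "\<dots> = real ((m0 + r) choose m)"
    unfolding hyper_weight_def vandermonde[symmetric] by simp
  finally show ?thesis
    by (simp add: lessThan_Suc_atMost[symmetric])
qed

theorem mainTheorem4:
  fixes m0 r m :: nat
  assumes "m \<le> m0 + r"
  shows "hyper_expect m0 r m
           (\<lambda>X. (real_of_int X / real_of_int (1 + int m - X)) *
                 (real_of_int (int r + X - int m) / real_of_int (1 + int m0 - X)))
         = 1 - binomZ (int m0) (int (min m0 m)) * binomZ (int r) (int m - int (min m0 m))
                 / binomZ (int m0 + int r) (int m)
       \<and> hyper_expect m0 r m
           (\<lambda>X. (real_of_int X / real_of_int (1 + int m - X)) *
                 (real_of_int (int r + X - int m) / real_of_int (1 + int m0 - X))) \<le> 1"
proof -
  define N where "N = real ((m0 + r) choose m)"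
  have N_pos: "N > 0"
    using assms unfolding N_def by simp
  have "binomZ (int m0 + int r) (int m) = N"
    using assms unfolding binomZ_def N_def by (simp add: nat_add_distrib)
  moreover have "hyper_expect m0 r m
           (\<lambda>X. (real_of_int X / real_of_int (1 + int m - X)) *
                 (real_of_int (int r + X - int m) / real_of_int (1 + int m0 - X)))
         = 1 - hyper_weight m0 r m (min m0 m) / N"
    unfolding hyper_expect_eq_sum[OF assms] sum_hyper_weight_ratio
      sum_lessThan_min_hyper_weight N_def[symmetric]
    using N_pos by (simp add: diff_divide_distrib)
  moreover have "hyper_weight m0 r m (min m0 m) \<ge> 0"
    by (simp add: hyper_weight_def)
  ultimately show ?thesis
    using N_pos by (simp add: binomZ_hyper_weight)
qed

end
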